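(* Let $a,b>-1$, $n\ge1$, $\lambda$ a partition with $\ell(\lambda)\le n$, and $\sigma=(a+b+1)/2$. Then $$\frac{\mathfrak P_\lambda(x_1,\dots,x_n;a,b)}{\mathfrak P_\lambda(1,\dots,1;a,b)}=\sum_{\mu}\frac{I_\mu(\lambda;1;\sigma+n)\,s_\mu(x_1-1,\dots,x_n-1)}{c(n,\mu;a)},$$ the sum over partitions $\mu$ with $\ell(\mu)\le n$, where $s_\mu$ is the Schur polynomial and $$c(n,\mu;a)=2^{|\mu|}\prod_{i=1}^n\frac{\Gamma(\mu_i+n-i+1)\,\Gamma(\mu_i+n-i+a+1)}{\Gamma(n-i+1)\,\Gamma(n-i+a+1)}.$$ Equivalently, with $l_i=\lambda_i+n-i+\sigma$, the numerator $I_\mu(\lambda;1;\sigma+n)$ equals the factorial Schur polynomial $s_\mu(l_1^2,\dots,l_n^2\mid \sigma^2,(\sigma+1)^2,(\sigma+2)^2,\dots)$.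
   Context: $\mathfrak p_l(x;a,b)=\frac{\Gamma(l+a+1)}{\Gamma(l+1)\Gamma(a+1)}{}_2F_1(-l,l+a+b+1;a+1;\frac{1-x}2)$ are the classical Jacobi polynomials; $\mathfrak P_\lambda(x_1,\dots,x_n;a,b)=\det_{1\le i,j\le n}[\mathfrak p_{\lambda_i+n-i}(x_j;a,b)]/\prod_{i<j}(x_i-x_j)$ (a polynomial, so its value at $(1,\dots,1)$ makes sense). For a sequence $A=(A_1,A_2,\dots)$, $(y\mid A)^m=(y-A_1)\cdots(y-A_m)$, $(y\mid A)^0=1$, and the factorial Schur polynomial is $s_\mu(y_1,\dots,y_n\mid A)=\det_{1\le i,j\le n}[(y_i\mid A)^{\mu_j+n-j}]/\prod_{i<j}(y_i-y_j)$. For $\theta=1$ the interpolation $BC_n$ polynomial is $I_\mu(x_1,\dots,x_n;1;h)=s_\mu\big((x_1+h-1)^2,\dots,(x_n+h-n)^2\mid (h-n)^2,(h-n+1)^2,(h-n+2)^2,\dots\big)$, and $I_\mu(\lambda;1;h_0)$ denotes its value at $x=\lambda$, $h=h_0$. *)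

theory Defs
  imports "HOL-Analysis.Analysis" "Jordan_Normal_Form.Determinant"
begin

text \<open>Conventions: indices are 0-based. A vector (x_1,...,x_n) is a function
  x :: nat => real with x i standing for x_(i+1), i < n. A partition with at most
  n parts is a nonincreasing list of naturals of length exactly n (padded with zeros).
  A sequence (A_1, A_2, ...) is a function A :: nat => real with A k = A_(k+1).\<close>

definition partitions :: "nat \<Rightarrow> nat list set" where
  "partitions n = {mu. length mu = n \<and> sorted_wrt (\<lambda>p q. p \<ge> q) mu}"

definition hyp2F1_term :: "nat \<Rightarrow> real \<Rightarrow> real \<Rightarrow> real \<Rightarrow> real" where
  "hyp2F1_term l c d z =
     (\<Sum>k = 0..l. pochhammer (- real l) k * pochhammer c k / (pochhammer d k * fact k) * z ^ k)"

definition jacobi :: "nat \<Rightarrow> real \<Rightarrow> real \<Rightarrow> real \<Rightarrow> real" where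
  "jacobi l a b x = Gamma (real l + a + 1) / (Gamma (real l + 1) * Gamma (a + 1)) *
     hyp2F1_term l (real l + a + b + 1) (a + 1) ((1 - x) / 2)"

definition vandermonde :: "nat \<Rightarrow> (nat \<Rightarrow> real) \<Rightarrow> real" where
  "vandermonde n x = (\<Prod>i<n. \<Prod>j\<in>{i<..<n}. (x i - x j))"

text \<open>Value of the (polynomial) ratio g at an arbitrary point x, including points with
  coinciding coordinates: the limit of g along x + t*(0,1,...,n-1), t -> 0, whose
  coordinates are pairwise distinct for all small t ~= 0. For a polynomial this is its value.\<close>
definition polyext :: "((nat \<Rightarrow> real) \<Rightarrow> real) \<Rightarrow> (nat \<Rightarrow> real) \<Rightarrow> real" where
  "polyext g x = Lim (at (0::real)) (\<lambda>t. g (\<lambda>i. x i + t * real i))"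

definition jacobiP :: "nat \<Rightarrow> nat list \<Rightarrow> real \<Rightarrow> real \<Rightarrow> (nat \<Rightarrow> real) \<Rightarrow> real" where
  "jacobiP n lam a b x = polyext
     (\<lambda>y. det (mat n n (\<lambda>(i, j). jacobi (lam ! i + n - 1 - i) a b (y j))) / vandermonde n y) x"

definition fpow :: "(nat \<Rightarrow> real) \<Rightarrow> real \<Rightarrow> nat \<Rightarrow> real" where
  "fpow A y m = (\<Prod>k<m. (y - A k))"

definition fschur :: "nat \<Rightarrow> nat list \<Rightarrow> (nat \<Rightarrow> real) \<Rightarrow> (nat \<Rightarrow> real) \<Rightarrow> real" where
  "fschur n mu y A = polyext
     (\<lambda>z. det (mat n n (\<lambda>(i, j). fpow A (z i) (mu ! j + n - 1 - j))) / vandermonde n z) y"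

definition schur :: "nat \<Rightarrow> nat list \<Rightarrow> (nat \<Rightarrow> real) \<Rightarrow> real" where
  "schur n mu y = fschur n mu y (\<lambda>_. 0)"

definition interpI :: "nat \<Rightarrow> nat list \<Rightarrow> (nat \<Rightarrow> real) \<Rightarrow> real \<Rightarrow> real" where
  "interpI n mu x h = fschur n mu (\<lambda>i. (x i + h - real (i + 1)) ^ 2)
     (\<lambda>k. (h - real n + real k) ^ 2)"

definition cconst :: "nat \<Rightarrow> nat list \<Rightarrow> real \<Rightarrow> real" where
  "cconst n mu a = 2 ^ sum_list mu *
     (\<Prod>i<n. Gamma (real (mu ! i + n - 1 - i) + 1) * Gamma (real (mu ! i + n - 1 - i) + a + 1)
            / (Gamma (real (n - 1 - i) + 1) * Gamma (real (n - 1 - i) + a + 1)))"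

end

theory Submission
  imports Defs
begin

text \<open>At 1 the Jacobi polynomial has the terminating expansion
  \<open>p_l(y) = N_l \<Sum>_k ((l+\<sigma>)^2 | \<sigma>^2, (\<sigma>+1)^2, \<dots>)^k (y-1)^k / w_k\<close>, \<open>w_k = (a+1)_k k! 2^k\<close>,
  whose coefficients are factorial powers vanishing for \<open>k > l\<close>. By Cauchy--Binet,
  \<open>det[p_(l_i)(x_j)]\<close> with \<open>l_i = \<lambda>_i + n - i\<close> is a finite sum over partitions \<open>\<mu>\<close> of a minor
  of the coefficient matrix times \<open>det[(x_j - 1)^(\<mu>_i + n - i)]\<close>, which is \<open>s_\<mu>(x - 1)\<close> times
  the Vandermonde determinant of \<open>x\<close>. The minor is again an alternant, now of factorial
  powers, so up to the factors \<open>N_l\<close> and \<open>w_k\<close> it is \<open>s_\<mu>((l+\<sigma>)^2 | \<sigma>^2, (\<sigma>+1)^2, \<dots>)\<close> times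
  the Vandermonde determinant of the nodes \<open>(l_i+\<sigma>)^2\<close>, which are distinct as \<open>2\<sigma> > -1\<close>.
  At \<open>x = 1\<close> only \<open>\<mu> = 0\<close> survives; dividing by this value cancels the common factors and
  turns the ratios of the \<open>w_k\<close> into \<open>c(n,\<mu>;a)\<close>. Newton interpolation writes every such
  alternant as an explicit polynomial times the Vandermonde determinant, which also evaluates
  the limits that define the values at coinciding points.\<close>

section \<open>Determinants and the Cauchy--Binet formula\<close>

definition det_fun :: "nat \<Rightarrow> (nat \<Rightarrow> nat \<Rightarrow> 'a::comm_ring_1) \<Rightarrow> 'a" where
  "det_fun n F = det (mat n n (\<lambda>(i, j). F i j))"

lemma det_fun_Leibniz:
  "det_fun n F = (\<Sum>p\<in>{p. p permutes {0..<n}}. signof p * (\<Prod>i=0..<n. F i (p i)))"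
  unfolding det_fun_def
  by (subst det_def'[of _ n]) (auto intro!: sum.cong prod.cong simp: permutes_in_image)

lemma det_fun_cong:
  "(\<And>i j. i < n \<Longrightarrow> j < n \<Longrightarrow> F i j = G i j) \<Longrightarrow> det_fun n F = det_fun n G"
  unfolding det_fun_Leibniz by (auto intro!: sum.cong prod.cong simp: permutes_in_image)

lemma det_fun_scale:
  "det_fun n (\<lambda>i j. r i * c j * F i j) = (\<Prod>i<n. r i) * (\<Prod>j<n. c j) * det_fun n F"
proof -
  have "signof p * (\<Prod>i=0..<n. r i * c (p i) * F i (p i)) =
        (\<Prod>i<n. r i) * (\<Prod>j<n. c j) * (signof p * (\<Prod>i=0..<n. F i (p i)))"
    if p: "p permutes {0..<n}" for p
  proof -
    have "(\<Prod>i=0..<n. c (p i)) = (\<Prod>j=0..<n. c j)"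
      using prod.permute[OF p, of c] by (simp add: comp_def)
    then show ?thesis by (simp add: prod.distrib atLeast0LessThan mult_ac)
  qed
  then show ?thesis
    unfolding det_fun_Leibniz sum_distrib_left by (auto intro!: sum.cong)
qed

lemma det_fun_zero_row:
  assumes "k < n" "\<And>j. j < n \<Longrightarrow> F k j = 0"
  shows "det_fun n F = 0"
proof -
  have "(\<Prod>i=0..<n. F i (p i)) = 0" if "p permutes {0..<n}" for p
    using that assms by (intro prod_zero) (auto intro!: bexI[of _ k] simp: permutes_in_image)
  then show ?thesis
    unfolding det_fun_Leibniz by simp
qed

lemma det_fun_transpose: "det_fun n (\<lambda>i j. F j i) = det_fun n F"
proof -
  have "mat n n (\<lambda>(i, j). F j i) = transpose_mat (mat n n (\<lambda>(i, j). F i j))"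
    by (rule eq_matI) auto
  then show ?thesis
    unfolding det_fun_def by (simp add: det_transpose[of _ n])
qed

lemma det_fun_identical_rows:
  assumes "i \<noteq> j" "i < n" "j < n" "\<And>c. c < n \<Longrightarrow> F i c = F j c"
  shows "det_fun n F = 0"
  unfolding det_fun_def
  by (rule det_identical_rows[of _ n i j]) (use assms in \<open>auto intro!: eq_vecI\<close>)

lemma det_fun_permute_rows:
  assumes p: "p permutes {0..<n}"
  shows "det_fun n (\<lambda>i j. F (p i) j) = signof p * det_fun n F"
proof -
  have "mat n n (\<lambda>(i, j). F (p i) j) = mat n n (\<lambda>(i, j). mat n n (\<lambda>(i, j). F i j) $$ (p i, j))"
    by (rule eq_matI) (use p in \<open>auto simp: permutes_in_image\<close>)
  then show ?thesis
    unfolding det_fun_def using det_permute_rows[OF _ p, of "mat n n (\<lambda>(i, j). F i j)"] by simp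
qed

lemma det_fun_mult:
  "det_fun n (\<lambda>i j. \<Sum>r<n. E i r * U r j) = det_fun n E * det_fun n U"
proof -
  have "mat n n (\<lambda>(i, j). \<Sum>r<n. E i r * U r j) =
        mat n n (\<lambda>(i, j). E i j) * mat n n (\<lambda>(i, j). U i j)"
    by (rule eq_matI) (auto simp: scalar_prod_def atLeast0LessThan intro!: sum.cong)
  then show ?thesis
    unfolding det_fun_def by (simp add: det_mult[of _ n])
qed

lemma det_fun_lower_triangular:
  "(\<And>i j. i < j \<Longrightarrow> j < n \<Longrightarrow> F i j = 0) \<Longrightarrow> det_fun n F = (\<Prod>i<n. F i i)"
  unfolding det_fun_def
  by (subst det_lower_triangular[of n])
     (auto simp: diag_mat_def prod.distinct_set_conv_list[symmetric] atLeast0LessThan)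

lemma det_fun_upper_triangular:
  "(\<And>i j. j < i \<Longrightarrow> i < n \<Longrightarrow> F i j = 0) \<Longrightarrow> det_fun n F = (\<Prod>i<n. F i i)"
  unfolding det_fun_def
  by (subst det_upper_triangular[of _ n])
     (auto simp: upper_triangular_def diag_mat_def prod.distinct_set_conv_list[symmetric]
        atLeast0LessThan)

lemma isCont_det_fun:
  fixes F :: "'b::t2_space \<Rightarrow> nat \<Rightarrow> nat \<Rightarrow> 'a::real_normed_field"
  assumes "\<And>i j. isCont (\<lambda>t. F t i j) t0"
  shows "isCont (\<lambda>t. det_fun n (F t)) t0"
  unfolding det_fun_Leibniz by (auto intro!: continuous_intros assms)

definition strict_dec_lists :: "nat \<Rightarrow> nat \<Rightarrow> nat list set" where
  "strict_dec_lists n N = {ks. length ks = n \<and> sorted_wrt (>) ks \<and> set ks \<subseteq> {..<N}}"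

lemma sorted_greater_distinct: "sorted_wrt (>) (ks :: 'a::linorder list) \<Longrightarrow> distinct ks"
  by (metis distinct_rev sorted_wrt_rev strict_sorted_iff)

lemma sorted_greater_eqI:
  fixes ks ks' :: "'a::linorder list"
  assumes "sorted_wrt (>) ks" "sorted_wrt (>) ks'" "set ks = set ks'"
  shows "ks = ks'"
proof -
  have "rev ks = rev ks'"
    by (rule strict_sorted_equal) (use assms in \<open>simp_all add: sorted_wrt_rev\<close>)
  then show ?thesis by simp
qed

lemma image_nth_permutes:
  assumes "p permutes {0..<n}" "length ks = n"
  shows "(\<lambda>i. ks ! p i) ` {0..<n} = set ks"
proof -
  have "(\<lambda>i. ks ! p i) ` {0..<n} = (!) ks ` (p ` {0..<n})" by auto
  also have "\<dots> = set ks"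
    using assms by (auto simp: permutes_image in_set_conv_nth)
  finally show ?thesis .
qed

definition injections :: "nat \<Rightarrow> nat \<Rightarrow> (nat \<Rightarrow> nat) set" where
  "injections n N = {f \<in> {0..<n} \<rightarrow>\<^sub>E {..<N}. inj_on f {0..<n}}"

lemma inj_on_strict_dec_lists_permutations:
  "inj_on (\<lambda>(ks, p). restrict (\<lambda>i. ks ! p i) {0..<n}) (strict_dec_lists n N \<times> {p. p permutes {0..<n}})"
proof (rule inj_onI)
  let ?enum = "\<lambda>(ks, p). restrict (\<lambda>i. ks ! p i) {0..<n}"
  fix u v
  assume "u \<in> strict_dec_lists n N \<times> {p. p permutes {0..<n}}"
    and "v \<in> strict_dec_lists n N \<times> {p. p permutes {0..<n}}"
    and eq: "?enum u = ?enum v"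
  moreover obtain ks p ks' p' where uv: "u = (ks, p)" "v = (ks', p')"
    by (cases u, cases v)
  ultimately have ks: "length ks = n" "sorted_wrt (>) ks" and p: "p permutes {0..<n}"
    and ks': "length ks' = n" "sorted_wrt (>) ks'" and p': "p' permutes {0..<n}"
    by (auto simp: strict_dec_lists_def)
  have eqi: "ks ! p i = ks' ! p' i" if "i < n" for i
    using fun_cong[OF eq, of i] that uv by simp
  have "set ks = (\<lambda>i. ks ! p i) ` {0..<n}"
    by (rule image_nth_permutes[OF p ks(1), symmetric])
  also have "\<dots> = (\<lambda>i. ks' ! p' i) ` {0..<n}"
    by (rule image_cong) (auto simp: eqi)
  also have "\<dots> = set ks'"
    by (rule image_nth_permutes[OF p' ks'(1)])
  finally have kk: "ks = ks'"
    using sorted_greater_eqI ks(2) ks'(2) by blast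
  have "p i = p' i" for i
  proof (cases "i < n")
    case True
    then have "p i < n" "p' i < n" using p p' by (auto simp: permutes_in_image)
    then show ?thesis
      using eqi[OF True] kk sorted_greater_distinct[OF ks(2)] ks(1)
      by (simp add: nth_eq_iff_index_eq)
  qed (use p p' in \<open>simp add: permutes_def\<close>)
  then show "u = v" using kk uv by auto
qed

lemma nth_permutes_in_injections:
  assumes "ks \<in> strict_dec_lists n N" "p permutes {0..<n}"
  shows "restrict (\<lambda>i. ks ! p i) {0..<n} \<in> injections n N"
proof -
  have ks: "length ks = n" "sorted_wrt (>) ks" "set ks \<subseteq> {..<N}" and p: "p permutes {0..<n}"
    using assms by (auto simp: strict_dec_lists_def)
  have "inj_on (\<lambda>i. ks ! p i) {0..<n}"
  proof (rule inj_onI)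
    fix i j assume "i \<in> {0..<n}" "j \<in> {0..<n}" "ks ! p i = ks ! p j"
    then have "p i = p j"
      using p ks(1) sorted_greater_distinct[OF ks(2)]
      by (simp add: nth_eq_iff_index_eq permutes_in_image)
    then show "i = j"
      using permutes_inj[OF p] by (simp add: inj_eq)
  qed
  moreover have "ks ! p i \<in> {..<N}" if "i \<in> {0..<n}" for i
    using image_nth_permutes[OF p ks(1)] ks(3) that by blast
  ultimately show ?thesis
    by (simp add: injections_def restrict_PiE_iff)
qed

text \<open>Sort the image of the injection decreasingly and read off the permutation.\<close>
lemma injection_factorization:
  assumes "f \<in> injections n N"
  obtains ks p where "ks \<in> strict_dec_lists n N" "p permutes {0..<n}"
    "f = restrict (\<lambda>i. ks ! p i) {0..<n}"
proof -
  have inj: "inj_on f {0..<n}" and f: "f \<in> {0..<n} \<rightarrow>\<^sub>E {..<N}"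
    using assms by (auto simp: injections_def)
  define ks where "ks = rev (sorted_list_of_set (f ` {0..<n}))"
  have set_ks: "set ks = f ` {0..<n}" and len_ks: "length ks = n"
    using inj by (simp_all add: ks_def length_sorted_list_of_set card_image)
  have sorted_ks: "sorted_wrt (>) ks"
    unfolding ks_def sorted_wrt_rev by (rule strict_sorted_list_of_set)
  have nth_bij: "bij_betw ((!) ks) {..<n} (set ks)"
    by (rule bij_betw_nth) (simp_all add: len_ks sorted_greater_distinct[OF sorted_ks])
  define p where "p i = (if i < n then inv_into {..<n} ((!) ks) (f i) else i)" for i
  have f_in: "f i \<in> (!) ks ` {..<n}" if "i < n" for i
    using that set_ks bij_betw_imp_surj_on[OF nth_bij] by auto
  have p_in: "p i < n" and ks_p: "ks ! p i = f i" if "i < n" for i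
    using inv_into_into[OF f_in[OF that]] f_inv_into_f[OF f_in[OF that]] that
    by (simp_all add: p_def)
  have "inj_on p {0..<n}"
    by (rule inj_onI) (metis ks_p atLeastLessThan_iff inj inj_on_def)
  then have "p permutes {0..<n}"
    by (rule inj_on_nat_permutes) (use p_in in \<open>auto simp: p_def\<close>)
  moreover have "f = restrict (\<lambda>i. ks ! p i) {0..<n}"
    using f ks_p by (auto simp: PiE_def extensional_def)
  moreover have "ks \<in> strict_dec_lists n N"
    using len_ks sorted_ks set_ks f by (auto simp: strict_dec_lists_def)
  ultimately show ?thesis
    using that by blast
qed

lemma bij_betw_strict_dec_lists_permutations:
  "bij_betw (\<lambda>(ks, p). restrict (\<lambda>i. ks ! p i) {0..<n})
     (strict_dec_lists n N \<times> {p. p permutes {0..<n}}) (injections n N)"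
  (is "bij_betw ?enum ?X _")
proof (rule bij_betw_imageI[OF inj_on_strict_dec_lists_permutations])
  show "?enum ` ?X = injections n N"
  proof
    show "injections n N \<subseteq> ?enum ` ?X"
    proof
      fix f assume "f \<in> injections n N"
      then obtain ks p where "ks \<in> strict_dec_lists n N" "p permutes {0..<n}"
        "f = restrict (\<lambda>i. ks ! p i) {0..<n}"
        by (rule injection_factorization)
      then show "f \<in> ?enum ` ?X"
        by (intro image_eqI[of _ _ "(ks, p)"]) auto
    qed
  qed (auto intro: nth_permutes_in_injections)
qed

text \<open>Expand by multilinearity in the rows; terms with a repeated row index vanish.\<close>
lemma det_fun_product_eq_sum_injections:
  "det_fun n (\<lambda>i j. \<Sum>k<N. C i k * P k j) =
   (\<Sum>f\<in>injections n N. (\<Prod>i=0..<n. C i (f i)) * det_fun n (\<lambda>i j. P (f i) j))"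
proof -
  define Perms where "Perms = {p. p permutes {0..<n}}"
  define Funs where "Funs = {0..<n} \<rightarrow>\<^sub>E {..<N::nat}"
  have "det_fun n (\<lambda>i j. \<Sum>k<N. C i k * P k j) =
        (\<Sum>p\<in>Perms. signof p * (\<Sum>f\<in>Funs. \<Prod>i=0..<n. C i (f i) * P (f i) (p i)))"
    by (simp add: det_fun_Leibniz Perms_def Funs_def prod_sum_PiE)
  also have "\<dots> = (\<Sum>p\<in>Perms. \<Sum>f\<in>Funs. (\<Prod>i=0..<n. C i (f i)) * (signof p * (\<Prod>i=0..<n. P (f i) (p i))))"
    by (simp add: sum_distrib_left prod.distrib mult.left_commute)
  also have "\<dots> = (\<Sum>f\<in>Funs. (\<Prod>i=0..<n. C i (f i)) * det_fun n (\<lambda>i j. P (f i) j))"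
    by (subst sum.swap) (simp add: det_fun_Leibniz Perms_def sum_distrib_left)
  also have "\<dots> = (\<Sum>f\<in>injections n N. (\<Prod>i=0..<n. C i (f i)) * det_fun n (\<lambda>i j. P (f i) j))"
  proof (rule sum.mono_neutral_right)
    show "\<forall>f\<in>Funs - injections n N. (\<Prod>i=0..<n. C i (f i)) * det_fun n (\<lambda>i j. P (f i) j) = 0"
    proof
      fix f assume "f \<in> Funs - injections n N"
      then obtain i1 i2 where "i1 \<noteq> i2" "i1 < n" "i2 < n" "f i1 = f i2"
        by (auto simp: Funs_def injections_def inj_on_def)
      then have "det_fun n (\<lambda>i j. P (f i) j) = 0"
        by (intro det_fun_identical_rows[of i1 i2]) auto
      then show "(\<Prod>i=0..<n. C i (f i)) * det_fun n (\<lambda>i j. P (f i) j) = 0"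
        by simp
    qed
  qed (auto simp: Funs_def injections_def finite_PiE)
  finally show ?thesis .
qed

theorem det_fun_Cauchy_Binet:
  "det_fun n (\<lambda>i j. \<Sum>k<N. C i k * P k j) =
   (\<Sum>ks\<in>strict_dec_lists n N. det_fun n (\<lambda>i j. C i (ks ! j)) * det_fun n (\<lambda>i j. P (ks ! i) j))"
proof -
  define T where "T f = (\<Prod>i=0..<n. C i (f i)) * det_fun n (\<lambda>i j. P (f i) j)" for f
  have "det_fun n (\<lambda>i j. \<Sum>k<N. C i k * P k j) =
      (\<Sum>(ks, p)\<in>strict_dec_lists n N \<times> {p. p permutes {0..<n}}. T (restrict (\<lambda>i. ks ! p i) {0..<n}))"
    unfolding det_fun_product_eq_sum_injections T_def[symmetric]
    using sum.reindex_bij_betw[OF bij_betw_strict_dec_lists_permutations, of T n N]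
    by (simp add: split_def)
  also have "\<dots> = (\<Sum>ks\<in>strict_dec_lists n N. \<Sum>p | p permutes {0..<n}.
        det_fun n (\<lambda>i j. P (ks ! i) j) * (signof p * (\<Prod>i=0..<n. C i (ks ! p i))))"
    unfolding sum.cartesian_product[symmetric]
  proof (intro sum.cong refl)
    fix ks p assume "p \<in> {p. p permutes {0..<n}}"
    then have p: "p permutes {0..<n}" by simp
    have "det_fun n (\<lambda>i j. P (restrict (\<lambda>i. ks ! p i) {0..<n} i) j) =
          det_fun n (\<lambda>i j. P (ks ! p i) j)"
      by (rule det_fun_cong) simp
    also have "\<dots> = signof p * det_fun n (\<lambda>i j. P (ks ! i) j)"
      by (rule det_fun_permute_rows[OF p])
    finally show "T (restrict (\<lambda>i. ks ! p i) {0..<n}) =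
        det_fun n (\<lambda>i j. P (ks ! i) j) * (signof p * (\<Prod>i=0..<n. C i (ks ! p i)))"
      unfolding T_def by (simp add: mult_ac)
  qed
  also have "\<dots> = (\<Sum>ks\<in>strict_dec_lists n N. det_fun n (\<lambda>i j. C i (ks ! j)) * det_fun n (\<lambda>i j. P (ks ! i) j))"
  proof (rule sum.cong[OF refl])
    fix ks
    show "(\<Sum>p | p permutes {0..<n}.
            det_fun n (\<lambda>i j. P (ks ! i) j) * (signof p * (\<Prod>i=0..<n. C i (ks ! p i)))) =
          det_fun n (\<lambda>i j. C i (ks ! j)) * det_fun n (\<lambda>i j. P (ks ! i) j)"
      unfolding det_fun_Leibniz[of n "\<lambda>i j. C i (ks ! j)"] sum_distrib_right
      by (rule sum.cong) (simp_all add: mult_ac)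
  qed
  finally show ?thesis .
qed

section \<open>Factorial Schur polynomials via Newton interpolation\<close>

text \<open>Coefficients of \<open>(y | A)\<^sup>k\<close> in the Newton basis \<open>\<Prod>s<d. y - q s\<close>; the recursion
  comes from \<open>y - A k = (y - q d) + (q d - A k)\<close>.\<close>
fun newton_coeff :: "(nat \<Rightarrow> real) \<Rightarrow> (nat \<Rightarrow> real) \<Rightarrow> nat \<Rightarrow> nat \<Rightarrow> real" where
  "newton_coeff A q 0 d = (if d = 0 then 1 else 0)"
| "newton_coeff A q (Suc k) d =
     (if d = 0 then 0 else newton_coeff A q k (d - 1)) + (q d - A k) * newton_coeff A q k d"

definition newton_basis :: "(nat \<Rightarrow> real) \<Rightarrow> nat \<Rightarrow> real \<Rightarrow> real" where
  "newton_basis q d y = (\<Prod>s<d. y - q s)"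

lemma newton_coeff_eq_0: "k < d \<Longrightarrow> newton_coeff A q k d = 0"
  by (induction k arbitrary: d) auto

lemma newton_coeff_diag: "newton_coeff A q k k = 1"
  by (induction k) (auto simp: newton_coeff_eq_0)

lemma newton_coeff_zero_nodes: "newton_coeff (\<lambda>_. 0) (\<lambda>_. 0) k d = (if k = d then 1 else 0)"
  by (induction k arbitrary: d) auto

lemma newton_basis_node: "s < d \<Longrightarrow> newton_basis q d (q s) = 0"
  unfolding newton_basis_def by (rule prod_zero) auto

lemma fpow_newton_expansion:
  "fpow A y k = (\<Sum>d\<le>k. newton_coeff A q k d * newton_basis q d y)"
proof (induction k)
  case 0
  then show ?case by (simp add: fpow_def newton_basis_def)
next
  case (Suc k)
  have "(\<Sum>d\<le>Suc k. newton_coeff A q (Suc k) d * newton_basis q d y) =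
        (\<Sum>d\<le>Suc k. (if d = 0 then 0 else newton_coeff A q k (d - 1)) * newton_basis q d y) +
        (\<Sum>d\<le>Suc k. (q d - A k) * newton_coeff A q k d * newton_basis q d y)"
    by (simp only: newton_coeff.simps distrib_right sum.distrib)
  also have "(\<Sum>d\<le>Suc k. (if d = 0 then 0 else newton_coeff A q k (d - 1)) * newton_basis q d y) =
        (\<Sum>d\<le>k. newton_coeff A q k d * newton_basis q d y * (y - q d))"
    by (subst sum.atMost_Suc_shift) (simp add: newton_basis_def mult.assoc)
  also have "(\<Sum>d\<le>Suc k. (q d - A k) * newton_coeff A q k d * newton_basis q d y) =
        (\<Sum>d\<le>k. (q d - A k) * newton_coeff A q k d * newton_basis q d y)"
    by (simp add: newton_coeff_eq_0)
  also have "(\<Sum>d\<le>k. newton_coeff A q k d * newton_basis q d y * (y - q d)) +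
        (\<Sum>d\<le>k. (q d - A k) * newton_coeff A q k d * newton_basis q d y) =
        (\<Sum>d\<le>k. newton_coeff A q k d * newton_basis q d y) * (y - A k)"
    unfolding sum.distrib[symmetric] sum_distrib_right by (rule sum.cong) (simp_all add: algebra_simps)
  also have "\<dots> = fpow A y (Suc k)"
    by (simp add: Suc.IH[symmetric] fpow_def)
  finally show ?case by simp
qed

lemma fpow_node_expansion:
  assumes "s < n"
  shows "fpow A (q s) k = (\<Sum>d<n. newton_coeff A q k d * newton_basis q d (q s))"
proof -
  have vanish: "newton_basis q d (q s) = 0" if "n \<le> d" for d
    using assms that by (simp add: newton_basis_node)
  have "fpow A (q s) k = (\<Sum>d\<in>{..k} \<inter> {..<n}. newton_coeff A q k d * newton_basis q d (q s))"
    unfolding fpow_newton_expansion[of A "q s" k q]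
    by (rule sum.mono_neutral_right) (auto simp: not_less vanish)
  also have "\<dots> = (\<Sum>d<n. newton_coeff A q k d * newton_basis q d (q s))"
    by (rule sum.mono_neutral_left) (auto, metis newton_coeff_eq_0 not_le)
  finally show ?thesis .
qed

lemma vandermonde_nonzero: "inj_on z {..<n} \<Longrightarrow> vandermonde n z \<noteq> 0"
  unfolding vandermonde_def by (auto simp: prod_zero_iff dest: inj_onD)

lemma vandermonde_shift: "vandermonde n (\<lambda>i. z i - c) = vandermonde n z"
  unfolding vandermonde_def by simp

text \<open>\<open>det[(z\<^sub>j | A)\<^bsup>\<kappa> i\<^esup>] / vandermonde n z\<close> as a determinant that is visibly polynomial
  in \<open>z\<close>; for \<open>\<kappa> = \<mu> + \<delta>\<close> this is the factorial Schur polynomial.\<close>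
definition fschur_poly :: "nat \<Rightarrow> (nat \<Rightarrow> real) \<Rightarrow> (nat \<Rightarrow> nat) \<Rightarrow> (nat \<Rightarrow> real) \<Rightarrow> real" where
  "fschur_poly n A \<kappa> z =
     det_fun n (\<lambda>i r. newton_coeff A (\<lambda>s. z (n - Suc s)) (\<kappa> i) (n - Suc r))"

text \<open>Expand each factorial power in the Newton basis at the nodes \<open>z (n-1), \<dots>, z 0\<close>:
  the matrix of basis values at the nodes is triangular with the Vandermonde factors
  on its diagonal.\<close>
lemma alternant_eq_fschur_poly:
  "det_fun n (\<lambda>i j. fpow A (z j) (\<kappa> i)) = fschur_poly n A \<kappa> z * vandermonde n z"
proof -
  define q where "q s = z (n - Suc s)" for s
  have zq: "z j = q (n - Suc j)" if "j < n" for j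
    using that by (simp add: q_def Suc_diff_Suc)
  have expand: "fpow A (z j) (\<kappa> i) =
      (\<Sum>r<n. newton_coeff A q (\<kappa> i) (n - Suc r) * newton_basis q (n - Suc r) (z j))"
    if "j < n" for i j
  proof -
    have "fpow A (z j) (\<kappa> i) =
        (\<Sum>d<n. newton_coeff A q (\<kappa> i) d * newton_basis q d (q (n - Suc j)))"
      using fpow_node_expansion[of "n - Suc j" n A q "\<kappa> i"] that zq[OF that] by simp
    then show ?thesis
      by (subst sum.nat_diff_reindex[symmetric]) (simp add: zq[OF that])
  qed
  have "det_fun n (\<lambda>i j. fpow A (z j) (\<kappa> i)) =
        fschur_poly n A \<kappa> z * det_fun n (\<lambda>r j. newton_basis q (n - Suc r) (z j))"
    unfolding fschur_poly_def q_def[symmetric] det_fun_mult[symmetric]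
    by (rule det_fun_cong) (simp add: expand)
  also have "det_fun n (\<lambda>r j. newton_basis q (n - Suc r) (z j)) =
             (\<Prod>j<n. newton_basis q (n - Suc j) (z j))"
    by (rule det_fun_lower_triangular) (simp add: zq newton_basis_node)
  also have "\<dots> = vandermonde n z"
    unfolding vandermonde_def newton_basis_def q_def
    by (intro prod.cong refl prod.reindex_bij_witness[where i = "\<lambda>p. n - Suc p" and j = "\<lambda>s. n - Suc s"])
       auto
  finally show ?thesis .
qed

lemma fschur_poly_eq_0:
  assumes "inj_on z {..<n}" "0 < n" "\<And>j. j < n \<Longrightarrow> fpow A (z j) (\<kappa> 0) = 0"
  shows "fschur_poly n A \<kappa> z = 0"
proof -
  have "det_fun n (\<lambda>i j. fpow A (z j) (\<kappa> i)) = 0"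
    using assms(2,3) by (rule det_fun_zero_row)
  with assms(1) show ?thesis
    by (simp add: alternant_eq_fschur_poly vandermonde_nonzero)
qed

lemma fschur_poly_staircase: "fschur_poly n A (\<lambda>i. n - Suc i) z = 1"
  unfolding fschur_poly_def
  by (subst det_fun_upper_triangular) (auto simp: newton_coeff_eq_0 newton_coeff_diag)

lemma fschur_poly_zero_at_zero:
  "0 < n \<Longrightarrow> n \<le> \<kappa> 0 \<Longrightarrow> fschur_poly n (\<lambda>_. 0) \<kappa> (\<lambda>_. 0) = 0"
  unfolding fschur_poly_def
  by (rule det_fun_zero_row[of 0]) (auto simp: newton_coeff_zero_nodes)

lemma fschur_poly_cong:
  "(\<And>i. i < n \<Longrightarrow> \<kappa> i = \<kappa>' i) \<Longrightarrow> fschur_poly n A \<kappa> z = fschur_poly n A \<kappa>' z"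
  unfolding fschur_poly_def by (rule det_fun_cong) simp

text \<open>The hypothesis \<open>0 < n\<close> keeps the reversed node index \<open>n - Suc s\<close> below \<open>n\<close> for every \<open>s\<close>.\<close>
lemma fschur_poly_cong_nodes:
  assumes "0 < n" "\<And>i. i < n \<Longrightarrow> z i = z' i"
  shows "fschur_poly n A \<kappa> z = fschur_poly n A \<kappa> z'"
proof -
  have "(\<lambda>s. z (n - Suc s)) = (\<lambda>s. z' (n - Suc s))"
    using assms by auto
  then show ?thesis
    unfolding fschur_poly_def by simp
qed

lemma isCont_newton_coeff:
  assumes "\<And>s. isCont (\<lambda>t. q t s) t0"
  shows "isCont (\<lambda>t. newton_coeff A (q t) k d) t0"
proof (induction k arbitrary: d)
  case (Suc k)
  have "isCont (\<lambda>t. if d = 0 then 0 else newton_coeff A (q t) k (d - 1)) t0"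
    by (cases "d = 0") (auto intro: Suc.IH)
  then show ?case
    by (auto intro!: continuous_intros assms Suc.IH)
qed simp

lemma isCont_fschur_poly:
  assumes "\<And>i. isCont (\<lambda>t. z t i) t0"
  shows "isCont (\<lambda>t. fschur_poly n A \<kappa> (z t)) t0"
  unfolding fschur_poly_def by (intro isCont_det_fun isCont_newton_coeff assms)

section \<open>Values at coinciding points\<close>

lemma eventually_inj_on_line:
  "eventually (\<lambda>t. inj_on (\<lambda>i. x i + t * real i) {..<n}) (at (0::real))"
proof -
  have "eventually (\<lambda>t. x i + t * real i \<noteq> x j + t * real j) (at (0::real))"
    if "i \<noteq> j" for i j
  proof (cases "x i = x j")
    case True
    then show ?thesis
      using that by (auto simp: eventually_at_filter)
  next
    case False
    have "((\<lambda>t. x i + t * real i - (x j + t * real j)) \<longlongrightarrow> x i - x j) (at (0::real))"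
      by (auto intro!: tendsto_eq_intros)
    then have "eventually (\<lambda>t. x i + t * real i - (x j + t * real j) \<noteq> 0) (at (0::real))"
      by (rule tendsto_imp_eventually_ne) (use False in simp)
    then show ?thesis
      by eventually_elim simp
  qed
  then have "eventually (\<lambda>t. \<forall>(i, j)\<in>{..<n} \<times> {..<n}. i \<noteq> j \<longrightarrow>
      x i + t * real i \<noteq> x j + t * real j) (at (0::real))"
    by (intro eventually_ball_finite) (auto intro: eventually_mono)
  then show ?thesis
    by eventually_elim (auto simp: inj_on_def)
qed

lemma polyext_eqI:
  assumes "\<And>z. inj_on z {..<n} \<Longrightarrow> g z = h z"
    and "isCont (\<lambda>t. h (\<lambda>i. x i + t * real i)) 0"
  shows "polyext g x = h x"
proof -
  have "((\<lambda>t. h (\<lambda>i. x i + t * real i)) \<longlongrightarrow> h x) (at 0)"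
    using assms(2) unfolding isCont_def by simp
  moreover have "eventually (\<lambda>t. h (\<lambda>i. x i + t * real i) = g (\<lambda>i. x i + t * real i)) (at 0)"
    using eventually_inj_on_line[of x n] by eventually_elim (simp add: assms(1))
  ultimately have "((\<lambda>t. g (\<lambda>i. x i + t * real i)) \<longlongrightarrow> h x) (at 0)"
    using tendsto_cong by force
  then show ?thesis
    unfolding polyext_def by (intro tendsto_Lim) auto
qed

definition shifted_part :: "nat \<Rightarrow> nat list \<Rightarrow> nat \<Rightarrow> nat" where
  "shifted_part n mu j = mu ! j + n - 1 - j"

lemma fschur_eq_fschur_poly: "fschur n mu y A = fschur_poly n A (shifted_part n mu) y"
  unfolding fschur_def
proof (rule polyext_eqI[where n = n])
  fix z :: "nat \<Rightarrow> real" assume "inj_on z {..<n}"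
  have "det (mat n n (\<lambda>(i, j). fpow A (z i) (mu ! j + n - 1 - j))) =
      det_fun n (\<lambda>i j. fpow A (z i) (shifted_part n mu j))"
    by (simp add: det_fun_def shifted_part_def)
  also have "\<dots> = det_fun n (\<lambda>i j. fpow A (z j) (shifted_part n mu i))"
    by (rule det_fun_transpose)
  also have "\<dots> = fschur_poly n A (shifted_part n mu) z * vandermonde n z"
    by (rule alternant_eq_fschur_poly)
  finally show "det (mat n n (\<lambda>(i, j). fpow A (z i) (mu ! j + n - 1 - j))) / vandermonde n z =
      fschur_poly n A (shifted_part n mu) z"
    using \<open>inj_on z {..<n}\<close> by (simp add: vandermonde_nonzero)
qed (intro isCont_fschur_poly continuous_intros)

lemma schur_eq_fschur_poly: "schur n mu y = fschur_poly n (\<lambda>_. 0) (shifted_part n mu) y"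
  unfolding schur_def by (rule fschur_eq_fschur_poly)

section \<open>Partitions and strictly decreasing sequences\<close>

definition bounded_partitions :: "nat \<Rightarrow> nat \<Rightarrow> nat list set" where
  "bounded_partitions n N = {mu \<in> partitions n. shifted_part n mu 0 < N}"

lemma partitions_nth_antimono:
  "mu \<in> partitions n \<Longrightarrow> i \<le> j \<Longrightarrow> j < n \<Longrightarrow> mu ! j \<le> mu ! i"
  unfolding partitions_def sorted_wrt_iff_nth_less by (cases "i = j") auto

lemma shifted_part_strict_antimono:
  "mu \<in> partitions n \<Longrightarrow> i < j \<Longrightarrow> j < n \<Longrightarrow> shifted_part n mu j < shifted_part n mu i"
  using partitions_nth_antimono[of mu n i j] unfolding shifted_part_def by linarith

lemma shifted_part_le_first:
  "mu \<in> partitions n \<Longrightarrow> i < n \<Longrightarrow> shifted_part n mu i \<le> shifted_part n mu 0"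
  using shifted_part_strict_antimono[of mu n 0 i] by (cases i) auto

lemma finite_bounded_partitions: "finite (bounded_partitions n N)"
proof (rule finite_subset)
  show "bounded_partitions n N \<subseteq> {xs. set xs \<subseteq> {..N} \<and> length xs = n}"
  proof clarify
    fix mu assume mu: "mu \<in> bounded_partitions n N"
    then have p: "mu \<in> partitions n" and len: "length mu = n"
      by (auto simp: bounded_partitions_def partitions_def)
    have "mu ! j \<le> N" if "j < n" for j
      using partitions_nth_antimono[OF p, of 0 j] that mu
      by (auto simp: bounded_partitions_def shifted_part_def)
    then show "set mu \<subseteq> {..N} \<and> length mu = n"
      using len by (auto simp: in_set_conv_nth)
  qed
qed (rule finite_lists_length_eq, simp)

lemma sorted_greater_nth_gap:
  assumes "sorted_wrt (>) (ks :: nat list)" "i \<le> j" "j < length ks"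
  shows "ks ! j + (j - i) \<le> ks ! i"
  using assms(2,3)
proof (induction j)
  case (Suc j)
  show ?case
  proof (cases "i = Suc j")
    case False
    then have "ks ! j + (j - i) \<le> ks ! i" using Suc by simp
    moreover have "ks ! Suc j < ks ! j"
      using assms(1) Suc.prems by (auto simp: sorted_wrt_iff_nth_less)
    ultimately show ?thesis using Suc.prems False by simp
  qed simp
qed simp

text \<open>Strictly decreasing lists are the lists \<open>\<mu> + \<delta>\<close>, \<open>\<delta> = (n-1, \<dots>, 1, 0)\<close>.\<close>
lemma sum_strict_dec_lists_eq_sum_bounded_partitions:
  assumes n: "0 < n"
  shows "(\<Sum>ks\<in>strict_dec_lists n N. f ks) =
         (\<Sum>mu\<in>bounded_partitions n N. f (map (shifted_part n mu) [0..<n]))"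
proof (rule sum.reindex_bij_witness[where i = "\<lambda>mu. map (shifted_part n mu) [0..<n]"
      and j = "\<lambda>ks. map (\<lambda>j. ks ! j - (n - 1 - j)) [0..<n]"])
  fix mu assume mu: "mu \<in> bounded_partitions n N"
  then have p: "mu \<in> partitions n" and len: "length mu = n"
    by (auto simp: bounded_partitions_def partitions_def)
  show "map (\<lambda>j. map (shifted_part n mu) [0..<n] ! j - (n - 1 - j)) [0..<n] = mu"
    using len by (intro nth_equalityI) (auto simp: shifted_part_def)
  have "sorted_wrt (>) (map (shifted_part n mu) [0..<n])"
    using shifted_part_strict_antimono[OF p] by (auto simp: sorted_wrt_iff_nth_less)
  moreover have "shifted_part n mu j < N" if "j < n" for j
    using shifted_part_le_first[OF p that] mu by (simp add: bounded_partitions_def)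
  ultimately show "map (shifted_part n mu) [0..<n] \<in> strict_dec_lists n N"
    by (auto simp: strict_dec_lists_def)
next
  fix ks assume "ks \<in> strict_dec_lists n N"
  then have len: "length ks = n" and sorted: "sorted_wrt (>) ks" and bound: "set ks \<subseteq> {..<N}"
    by (auto simp: strict_dec_lists_def)
  have gap: "ks ! j + (j - i) \<le> ks ! i" if "i \<le> j" "j < n" for i j
    using sorted_greater_nth_gap[OF sorted that(1)] that len by simp
  have ge: "n - 1 - j \<le> ks ! j" if "j < n" for j
    using gap[of j "n - 1"] that n by arith
  have "ks ! j - (n - 1 - j) + n - 1 - j = ks ! j" if "j < n" for j
    using ge[OF that] that by arith
  then show "map (shifted_part n (map (\<lambda>j. ks ! j - (n - 1 - j)) [0..<n])) [0..<n] = ks"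
    using len by (intro nth_equalityI) (auto simp: shifted_part_def)
  then show "f (map (shifted_part n (map (\<lambda>j. ks ! j - (n - 1 - j)) [0..<n])) [0..<n]) = f ks"
    by simp
  have "ks ! 0 \<in> set ks"
    using len n by simp
  then have "ks ! 0 < N"
    using bound by auto
  moreover have "ks ! j - (n - 1 - j) \<le> ks ! i - (n - 1 - i)" if "i < j" "j < n" for i j
    using gap[of i j] ge[of i] ge[of j] that by linarith
  ultimately show "map (\<lambda>j. ks ! j - (n - 1 - j)) [0..<n] \<in> bounded_partitions n N"
    using n ge[of 0]
    by (auto simp: bounded_partitions_def partitions_def sorted_wrt_iff_nth_less shifted_part_def)
qed

lemma shifted_part_replicate_0: "i < n \<Longrightarrow> shifted_part n (replicate n 0) i = n - Suc i"
  by (simp add: shifted_part_def)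

lemma fschur_replicate_0: "0 < n \<Longrightarrow> fschur n (replicate n 0) y A = 1"
  unfolding fschur_eq_fschur_poly
  by (subst fschur_poly_cong[where \<kappa>' = "\<lambda>i. n - Suc i"])
     (simp_all add: shifted_part_replicate_0 fschur_poly_staircase)

lemma schur_at_zero:
  assumes n: "0 < n" and mu: "mu \<in> partitions n"
  shows "schur n mu (\<lambda>_. 0) = (if mu = replicate n 0 then 1 else 0)"
proof (cases "mu = replicate n 0")
  case True
  then show ?thesis
    using fschur_replicate_0[OF n] by (simp add: schur_def)
next
  case False
  have "mu ! 0 \<noteq> 0"
  proof
    assume "mu ! 0 = 0"
    then have "mu = replicate n 0"
      using partitions_nth_antimono[OF mu, of 0] mu
      by (intro nth_equalityI) (auto simp: partitions_def)
    with False show False ..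
  qed
  then have "n \<le> shifted_part n mu 0"
    by (simp add: shifted_part_def)
  then show ?thesis
    using False fschur_poly_zero_at_zero[OF n] by (simp add: schur_eq_fschur_poly)
qed

lemma alternant_power_expansion:
  assumes n: "0 < n" and z: "inj_on z {..<n}"
  shows "det_fun n (\<lambda>i j. \<Sum>k<N. C i k * (z j - c) ^ k) / vandermonde n z =
    (\<Sum>mu\<in>bounded_partitions n N. det_fun n (\<lambda>i j. C i (shifted_part n mu j)) * schur n mu (\<lambda>i. z i - c))"
proof -
  have powers: "det_fun n (\<lambda>i j. (z j - c) ^ (ks ! i)) =
      fschur_poly n (\<lambda>_. 0) (\<lambda>i. ks ! i) (\<lambda>i. z i - c) * vandermonde n z" for ks
    using alternant_eq_fschur_poly[of n "\<lambda>_. 0" "\<lambda>i. z i - c" "\<lambda>i. ks ! i"]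
    by (simp add: fpow_def vandermonde_shift)
  have "det_fun n (\<lambda>i j. \<Sum>k<N. C i k * (z j - c) ^ k) =
      (\<Sum>ks\<in>strict_dec_lists n N.
         det_fun n (\<lambda>i j. C i (ks ! j)) * fschur_poly n (\<lambda>_. 0) (\<lambda>i. ks ! i) (\<lambda>i. z i - c)) *
      vandermonde n z"
    unfolding det_fun_Cauchy_Binet powers by (simp add: sum_distrib_right mult.assoc)
  also have "(\<Sum>ks\<in>strict_dec_lists n N.
         det_fun n (\<lambda>i j. C i (ks ! j)) * fschur_poly n (\<lambda>_. 0) (\<lambda>i. ks ! i) (\<lambda>i. z i - c)) =
      (\<Sum>mu\<in>bounded_partitions n N. det_fun n (\<lambda>i j. C i (shifted_part n mu j)) * schur n mu (\<lambda>i. z i - c))"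
    unfolding sum_strict_dec_lists_eq_sum_bounded_partitions[OF n] schur_eq_fschur_poly
    by (intro sum.cong refl arg_cong2[where f = "(*)"] det_fun_cong fschur_poly_cong) simp_all
  finally show ?thesis
    using vandermonde_nonzero[OF z] by simp
qed

lemma det_fun_factorial_powers:
  "det_fun n (\<lambda>i j. \<alpha> i * fpow A (L i) (\<kappa> j) / \<beta> (\<kappa> j)) =
     (\<Prod>i<n. \<alpha> i) / (\<Prod>j<n. \<beta> (\<kappa> j)) * fschur_poly n A \<kappa> L * vandermonde n L"
proof -
  have "det_fun n (\<lambda>i j. \<alpha> i * fpow A (L i) (\<kappa> j) / \<beta> (\<kappa> j)) =
      det_fun n (\<lambda>i j. \<alpha> i * (1 / \<beta> (\<kappa> j)) * fpow A (L i) (\<kappa> j))"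
    by (rule det_fun_cong) simp
  also have "\<dots> = (\<Prod>i<n. \<alpha> i) * (\<Prod>j<n. 1 / \<beta> (\<kappa> j)) * det_fun n (\<lambda>i j. fpow A (L i) (\<kappa> j))"
    by (rule det_fun_scale)
  also have "det_fun n (\<lambda>i j. fpow A (L i) (\<kappa> j)) = det_fun n (\<lambda>i j. fpow A (L j) (\<kappa> i))"
    by (rule det_fun_transpose)
  finally show ?thesis
    by (simp add: alternant_eq_fschur_poly prod_dividef)
qed

section \<open>The Taylor expansion of Jacobi polynomials at 1\<close>

definition jacobi_norm :: "real \<Rightarrow> nat \<Rightarrow> real" where
  "jacobi_norm a l = Gamma (real l + a + 1) / (Gamma (real l + 1) * Gamma (a + 1))"

definition jacobi_weight :: "real \<Rightarrow> nat \<Rightarrow> real" where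
  "jacobi_weight a k = pochhammer (a + 1) k * fact k * 2 ^ k"

definition shifted_squares :: "real \<Rightarrow> nat \<Rightarrow> real" where
  "shifted_squares s k = (s + real k) ^ 2"

lemma fpow_shifted_squares:
  "fpow (shifted_squares s) (shifted_squares s l) k =
     (-1) ^ k * pochhammer (- real l) k * pochhammer (real l + 2 * s) k"
proof -
  have "fpow (shifted_squares s) (shifted_squares s l) k =
      (\<Prod>j<k. (-1) * (- real l + real j) * (real l + 2 * s + real j))"
    unfolding fpow_def shifted_squares_def
    by (rule prod.cong) (simp_all add: power2_eq_square algebra_simps)
  also have "\<dots> = (-1) ^ k * pochhammer (- real l) k * pochhammer (real l + 2 * s) k"
    by (simp only: prod.distrib) (simp add: pochhammer_prod atLeast0LessThan)
  finally show ?thesis .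
qed

lemma fpow_shifted_squares_eq_0: "l < k \<Longrightarrow> fpow (shifted_squares s) (shifted_squares s l) k = 0"
  unfolding fpow_def shifted_squares_def by (rule prod_zero) auto

lemma inj_shifted_squares:
  assumes "2 * s > -1"
  shows "inj (shifted_squares s)"
proof
  fix p q assume "shifted_squares s p = shifted_squares s q"
  then have "s + real p = s + real q \<or> s + real p = - (s + real q)"
    by (simp add: shifted_squares_def power2_eq_iff)
  then show "p = q"
    using assms by auto
qed

lemma jacobi_Taylor_expansion:
  assumes "l < N" and s: "s = (a + b + 1) / 2"
  shows "jacobi l a b y = (\<Sum>k<N. jacobi_norm a l *
     fpow (shifted_squares s) (shifted_squares s l) k / jacobi_weight a k * (y - 1) ^ k)"
proof -
  have "pochhammer (- real l) k * pochhammer (real l + a + b + 1) k /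
        (pochhammer (a + 1) k * fact k) * ((1 - y) / 2) ^ k =
      fpow (shifted_squares s) (shifted_squares s l) k / jacobi_weight a k * (y - 1) ^ k" for k
  proof -
    have "((1 - y) / 2) ^ k = (-1) ^ k * (y - 1) ^ k / 2 ^ k"
      by (simp add: power_divide power_minus[symmetric])
    moreover have c: "real l + a + b + 1 = real l + 2 * s"
      by (simp add: s)
    ultimately show ?thesis
      unfolding fpow_shifted_squares jacobi_weight_def c by (simp add: field_simps)
  qed
  then have "jacobi l a b y = jacobi_norm a l *
      (\<Sum>k = 0..l. fpow (shifted_squares s) (shifted_squares s l) k / jacobi_weight a k * (y - 1) ^ k)"
    unfolding jacobi_def hyp2F1_term_def jacobi_norm_def by simp
  also have "(\<Sum>k = 0..l. fpow (shifted_squares s) (shifted_squares s l) k / jacobi_weight a k * (y - 1) ^ k) =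
      (\<Sum>k<N. fpow (shifted_squares s) (shifted_squares s l) k / jacobi_weight a k * (y - 1) ^ k)"
    by (rule sum.mono_neutral_left) (use assms(1) in \<open>auto simp: fpow_shifted_squares_eq_0\<close>)
  finally show ?thesis
    by (simp add: sum_distrib_left mult.assoc)
qed

lemma jacobi_weight_Gamma:
  assumes "a > -1"
  shows "jacobi_weight a k = Gamma (real k + 1) * Gamma (real k + a + 1) / Gamma (a + 1) * 2 ^ k"
proof -
  have "pochhammer (a + 1) k = Gamma (a + 1 + real k) / Gamma (a + 1)"
    using assms by (intro pochhammer_Gamma) auto
  moreover have "fact k = Gamma (real k + 1)"
    using Gamma_fact[of k, where 'a = real] by (simp add: add.commute)
  ultimately show ?thesis
    unfolding jacobi_weight_def by (simp add: algebra_simps)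
qed

lemma jacobi_weight_pos: "a > -1 \<Longrightarrow> jacobi_weight a k > 0"
  unfolding jacobi_weight_def by (intro mult_pos_pos pochhammer_pos) auto

lemma cconst_eq_jacobi_weights:
  assumes a: "a > -1" and len: "length mu = n"
  shows "cconst n mu a =
    (\<Prod>j<n. jacobi_weight a (shifted_part n mu j)) / (\<Prod>j<n. jacobi_weight a (n - Suc j))"
proof -
  have Gamma_pos: "Gamma (real k + 1) > 0" "Gamma (real k + a + 1) > 0" "Gamma (a + 1) > 0" for k
    using a by (auto intro!: Gamma_real_pos)
  have "jacobi_weight a (shifted_part n mu j) / jacobi_weight a (n - Suc j) =
     Gamma (real (mu ! j + n - 1 - j) + 1) * Gamma (real (mu ! j + n - 1 - j) + a + 1)
       / (Gamma (real (n - 1 - j) + 1) * Gamma (real (n - 1 - j) + a + 1)) * 2 ^ (mu ! j)"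
    if "j < n" for j
  proof -
    have "shifted_part n mu j = mu ! j + (n - Suc j)" "mu ! j + n - 1 - j = mu ! j + (n - Suc j)"
      using that by (simp_all add: shifted_part_def)
    then show ?thesis
      unfolding jacobi_weight_Gamma[OF a] using Gamma_pos
      by (simp add: power_add field_simps)
  qed
  then have "(\<Prod>j<n. jacobi_weight a (shifted_part n mu j)) / (\<Prod>j<n. jacobi_weight a (n - Suc j)) =
      (\<Prod>j<n. Gamma (real (mu ! j + n - 1 - j) + 1) * Gamma (real (mu ! j + n - 1 - j) + a + 1)
         / (Gamma (real (n - 1 - j) + 1) * Gamma (real (n - 1 - j) + a + 1))) * (\<Prod>j<n. 2 ^ (mu ! j))"
    unfolding prod_dividef[symmetric] prod.distrib[symmetric] by (intro prod.cong) simp_all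
  also have "(\<Prod>j<n. (2::real) ^ (mu ! j)) = 2 ^ sum_list mu"
    by (simp add: power_sum sum_list_sum_nth len atLeast0LessThan)
  finally show ?thesis
    unfolding cconst_def by simp
qed

section \<open>Expansion of the normalised multivariate Jacobi polynomial\<close>

lemma inj_on_jacobi_nodes:
  assumes "2 * s > -1" "lam \<in> partitions n"
  shows "inj_on (\<lambda>i. shifted_squares s (shifted_part n lam i)) {..<n}"
proof -
  have "inj_on (shifted_part n lam) {..<n}"
  proof (rule inj_onI, rule ccontr)
    fix i j assume "i \<in> {..<n}" "j \<in> {..<n}" "shifted_part n lam i = shifted_part n lam j" "i \<noteq> j"
    then show False
      using shifted_part_strict_antimono[OF assms(2), of i j]
        shifted_part_strict_antimono[OF assms(2), of j i]
      by (auto simp: neq_iff)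
  qed
  from comp_inj_on[OF this inj_on_subset[OF inj_shifted_squares[OF assms(1)] subset_UNIV]]
  show ?thesis
    by (simp add: comp_def)
qed

lemma jacobiP_expansion:
  assumes n: "0 < n" and lam: "lam \<in> partitions n" and N: "shifted_part n lam 0 < N"
    and s: "s = (a + b + 1) / 2"
  defines "L \<equiv> \<lambda>i. shifted_squares s (shifted_part n lam i)"
  shows "jacobiP n lam a b y =
    (\<Prod>i<n. jacobi_norm a (shifted_part n lam i)) * vandermonde n L *
    (\<Sum>mu\<in>bounded_partitions n N. fschur n mu L (shifted_squares s) * schur n mu (\<lambda>i. y i - 1)
       / (\<Prod>j<n. jacobi_weight a (shifted_part n mu j)))"
  unfolding jacobiP_def
proof (rule polyext_eqI[where n = n])
  fix z :: "nat \<Rightarrow> real" assume z: "inj_on z {..<n}"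
  define C where "C i k = jacobi_norm a (shifted_part n lam i) *
    fpow (shifted_squares s) (L i) k / jacobi_weight a k" for i k
  have "det (mat n n (\<lambda>(i, j). jacobi (lam ! i + n - 1 - i) a b (z j))) =
      det_fun n (\<lambda>i j. jacobi (shifted_part n lam i) a b (z j))"
    by (simp add: det_fun_def shifted_part_def)
  also have "\<dots> = det_fun n (\<lambda>i j. \<Sum>k<N. C i k * (z j - 1) ^ k)"
  proof (rule det_fun_cong)
    fix i j assume "i < n"
    then have "shifted_part n lam i < N"
      using shifted_part_le_first[OF lam] N by (meson le_less_trans)
    then show "jacobi (shifted_part n lam i) a b (z j) = (\<Sum>k<N. C i k * (z j - 1) ^ k)"
      unfolding C_def L_def by (rule jacobi_Taylor_expansion[OF _ s])
  qed
  finally have "det (mat n n (\<lambda>(i, j). jacobi (lam ! i + n - 1 - i) a b (z j))) / vandermonde n z =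
      (\<Sum>mu\<in>bounded_partitions n N. det_fun n (\<lambda>i j. C i (shifted_part n mu j)) * schur n mu (\<lambda>i. z i - 1))"
    by (simp add: alternant_power_expansion[OF n z])
  also have "\<dots> = (\<Prod>i<n. jacobi_norm a (shifted_part n lam i)) * vandermonde n L *
    (\<Sum>mu\<in>bounded_partitions n N. fschur n mu L (shifted_squares s) * schur n mu (\<lambda>i. z i - 1)
       / (\<Prod>j<n. jacobi_weight a (shifted_part n mu j)))"
  proof -
    have "det_fun n (\<lambda>i j. C i (shifted_part n mu j)) =
        (\<Prod>i<n. jacobi_norm a (shifted_part n lam i)) / (\<Prod>j<n. jacobi_weight a (shifted_part n mu j))
        * fschur n mu L (shifted_squares s) * vandermonde n L" for mu
      unfolding C_def fschur_eq_fschur_poly by (rule det_fun_factorial_powers)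
    then show ?thesis
      unfolding sum_distrib_left by (intro sum.cong refl) (simp add: divide_inverse mult_ac)
  qed
  finally show "det (mat n n (\<lambda>(i, j). jacobi (lam ! i + n - 1 - i) a b (z j))) / vandermonde n z =
    (\<Prod>i<n. jacobi_norm a (shifted_part n lam i)) * vandermonde n L *
    (\<Sum>mu\<in>bounded_partitions n N. fschur n mu L (shifted_squares s) * schur n mu (\<lambda>i. z i - 1)
       / (\<Prod>j<n. jacobi_weight a (shifted_part n mu j)))" .
qed (auto simp: schur_eq_fschur_poly divide_inverse intro!: continuous_intros isCont_fschur_poly)

lemma jacobiP_at_one:
  assumes n: "0 < n" and lam: "lam \<in> partitions n" and N: "shifted_part n lam 0 < N"
    and s: "s = (a + b + 1) / 2"
  defines "L \<equiv> \<lambda>i. shifted_squares s (shifted_part n lam i)"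
  shows "jacobiP n lam a b (\<lambda>_. 1) =
    (\<Prod>i<n. jacobi_norm a (shifted_part n lam i)) * vandermonde n L
      / (\<Prod>j<n. jacobi_weight a (n - Suc j))"
proof -
  define W0 where "W0 = (\<Prod>j<n. jacobi_weight a (n - Suc j))"
  have "replicate n 0 \<in> bounded_partitions n N"
    using n N by (auto simp: bounded_partitions_def partitions_def shifted_part_def sorted_wrt_iff_nth_less)
  have W_replicate_0: "(\<Prod>j<n. jacobi_weight a (shifted_part n (replicate n 0) j)) = W0"
    unfolding W0_def by (rule prod.cong) (simp_all add: shifted_part_replicate_0)
  have "(\<Sum>mu\<in>bounded_partitions n N. fschur n mu L (shifted_squares s) * schur n mu (\<lambda>i. 1 - 1)
       / (\<Prod>j<n. jacobi_weight a (shifted_part n mu j))) =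
      (\<Sum>mu\<in>bounded_partitions n N. if mu = replicate n 0 then 1 / W0 else 0)"
    by (intro sum.cong refl)
       (auto simp: bounded_partitions_def schur_at_zero[OF n] fschur_replicate_0[OF n] W_replicate_0)
  also have "\<dots> = 1 / W0"
    using \<open>replicate n 0 \<in> bounded_partitions n N\<close> finite_bounded_partitions by simp
  finally show ?thesis
    unfolding jacobiP_expansion[OF n lam N s, folded L_def] W0_def by simp
qed

lemma jacobiP_ratio_expansion:
  assumes a: "a > -1" and b: "b > -1" and n: "0 < n" and lam: "lam \<in> partitions n"
    and N: "shifted_part n lam 0 < N" and s: "s = (a + b + 1) / 2"
  defines "L \<equiv> \<lambda>i. shifted_squares s (shifted_part n lam i)"
  shows "jacobiP n lam a b x / jacobiP n lam a b (\<lambda>_. 1) =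
    (\<Sum>mu\<in>bounded_partitions n N.
       fschur n mu L (shifted_squares s) * schur n mu (\<lambda>i. x i - 1) / cconst n mu a)"
proof -
  define P where "P = (\<Prod>i<n. jacobi_norm a (shifted_part n lam i))"
  define W where "W mu = (\<Prod>j<n. jacobi_weight a (shifted_part n mu j))" for mu
  define W0 where "W0 = (\<Prod>j<n. jacobi_weight a (n - Suc j))"
  have "P > 0"
    unfolding P_def jacobi_norm_def using a
    by (intro prod_pos divide_pos_pos mult_pos_pos Gamma_real_pos) auto
  moreover have "vandermonde n L \<noteq> 0"
    unfolding L_def using a b s by (intro vandermonde_nonzero inj_on_jacobi_nodes lam) auto
  ultimately have "jacobiP n lam a b x / jacobiP n lam a b (\<lambda>_. 1) =
      (\<Sum>mu\<in>bounded_partitions n N. fschur n mu L (shifted_squares s) * schur n mu (\<lambda>i. x i - 1) / W mu) * W0"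
    unfolding jacobiP_at_one[OF n lam N s, folded L_def] jacobiP_expansion[OF n lam N s, folded L_def]
      P_def[symmetric] W_def[symmetric] W0_def[symmetric]
    by (simp add: divide_divide_eq_right)
  also have "\<dots> = (\<Sum>mu\<in>bounded_partitions n N.
       fschur n mu L (shifted_squares s) * schur n mu (\<lambda>i. x i - 1) / cconst n mu a)"
    unfolding sum_distrib_right
  proof (intro sum.cong refl)
    fix mu assume "mu \<in> bounded_partitions n N"
    then have "cconst n mu a = W mu / W0"
      unfolding W_def W0_def
      by (intro cconst_eq_jacobi_weights[OF a]) (simp add: bounded_partitions_def partitions_def)
    then show "fschur n mu L (shifted_squares s) * schur n mu (\<lambda>i. x i - 1) / W mu * W0 =
        fschur n mu L (shifted_squares s) * schur n mu (\<lambda>i. x i - 1) / cconst n mu a"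
      by simp
  qed
  finally show ?thesis .
qed

lemma fschur_jacobi_nodes_eq_0:
  assumes "2 * s > -1" "0 < n" "lam \<in> partitions n"
    and "shifted_part n lam 0 < shifted_part n mu 0"
  shows "fschur n mu (\<lambda>i. shifted_squares s (shifted_part n lam i)) (shifted_squares s) = 0"
  unfolding fschur_eq_fschur_poly
  using assms shifted_part_le_first[OF assms(3)]
  by (intro fschur_poly_eq_0 inj_on_jacobi_nodes fpow_shifted_squares_eq_0) (auto intro: le_less_trans)

lemma interpI_eq_fschur:
  assumes "0 < n"
  shows "interpI n mu (\<lambda>i. real (lam ! i)) (s + real n) =
    fschur n mu (\<lambda>i. shifted_squares s (shifted_part n lam i)) (shifted_squares s)"
proof -
  have nodes: "(real (lam ! i) + (s + real n) - real (i + 1)) ^ 2 = shifted_squares s (shifted_part n lam i)"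
    if "i < n" for i
    using that by (simp add: shifted_squares_def shifted_part_def of_nat_diff algebra_simps)
  have squares: "(\<lambda>k. (s + real n - real n + real k) ^ 2) = shifted_squares s"
    by (simp add: fun_eq_iff shifted_squares_def)
  show ?thesis
    unfolding interpI_def fschur_eq_fschur_poly squares
    by (intro fschur_poly_cong_nodes[OF assms]) (use nodes in simp)
qed

lemma has_sum_jacobiP_ratio:
  assumes a: "a > -1" and b: "b > -1" and n: "0 < n" and lam: "lam \<in> partitions n"
    and s: "s = (a + b + 1) / 2"
  defines "L \<equiv> \<lambda>i. shifted_squares s (shifted_part n lam i)"
  shows "((\<lambda>mu. fschur n mu L (shifted_squares s) * schur n mu (\<lambda>i. x i - 1) / cconst n mu a)
      has_sum (jacobiP n lam a b x / jacobiP n lam a b (\<lambda>_. 1))) (partitions n)"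
proof (rule has_sum_finite_neutralI[OF finite_bounded_partitions])
  define N where "N = Suc (shifted_part n lam 0)"
  show "bounded_partitions n N \<subseteq> partitions n"
    by (auto simp: bounded_partitions_def)
  show "fschur n mu L (shifted_squares s) * schur n mu (\<lambda>i. x i - 1) / cconst n mu a = 0"
    if "mu \<in> partitions n - bounded_partitions n N" for mu
  proof -
    have "shifted_part n lam 0 < shifted_part n mu 0"
      using that by (auto simp: N_def bounded_partitions_def)
    then show ?thesis
      using a b s by (simp add: L_def fschur_jacobi_nodes_eq_0[OF _ n lam])
  qed
  show "jacobiP n lam a b x / jacobiP n lam a b (\<lambda>_. 1) = (\<Sum>mu\<in>bounded_partitions n N.
      fschur n mu L (shifted_squares s) * schur n mu (\<lambda>i. x i - 1) / cconst n mu a)"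
    unfolding L_def by (rule jacobiP_ratio_expansion[OF a b n lam _ s]) (simp add: N_def)
qed

theorem proposition7p4:
  fixes a b :: real and n :: nat and lam :: "nat list" and x :: "nat \<Rightarrow> real"
  assumes "a > -1" and "b > -1" and "n \<ge> 1" and "lam \<in> partitions n"
  shows "((\<lambda>mu. interpI n mu (\<lambda>i. real (lam ! i)) ((a + b + 1) / 2 + real n)
                 * schur n mu (\<lambda>i. x i - 1) / cconst n mu a)
           has_sum (jacobiP n lam a b x / jacobiP n lam a b (\<lambda>_. 1))) (partitions n)
       \<and> (\<forall>mu \<in> partitions n.
            interpI n mu (\<lambda>i. real (lam ! i)) ((a + b + 1) / 2 + real n)
            = fschur n mu (\<lambda>i. (real (lam ! i + n - 1 - i) + (a + b + 1) / 2) ^ 2)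
                (\<lambda>k. ((a + b + 1) / 2 + real k) ^ 2))"
proof -
  define s where "s = (a + b + 1) / 2"
  define L where "L = (\<lambda>i. shifted_squares s (shifted_part n lam i))"
  have n: "0 < n"
    using assms(3) by simp
  have "interpI n mu (\<lambda>i. real (lam ! i)) ((a + b + 1) / 2 + real n) =
      fschur n mu L (shifted_squares s)" for mu
    unfolding L_def s_def by (rule interpI_eq_fschur[OF n])
  moreover have "((\<lambda>mu. fschur n mu L (shifted_squares s) * schur n mu (\<lambda>i. x i - 1) / cconst n mu a)
      has_sum (jacobiP n lam a b x / jacobiP n lam a b (\<lambda>_. 1))) (partitions n)"
    unfolding L_def by (rule has_sum_jacobiP_ratio[OF assms(1,2) n assms(4) s_def])
  moreover have "L = (\<lambda>i. (real (lam ! i + n - 1 - i) + (a + b + 1) / 2) ^ 2)"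
    and "shifted_squares s = (\<lambda>k. ((a + b + 1) / 2 + real k) ^ 2)"
    by (simp_all add: fun_eq_iff L_def s_def shifted_squares_def shifted_part_def add.commute)
  ultimately show ?thesis
    by simp
qed

end
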